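(* Let $X=\{x_1<\dots<x_r\} \subseteq Z=\{z_1<\dots<z_m\}$ be two sets of positive integers. For an integer $y$, let \[ \nu(y) = \#\{z\in Z\mid z\geq y\} + \#\{x\in X\mid x\leq y\}, \] and for a set $Y$, $\nu(Y) = \sum_{y\in Y} \nu(y)$. For $r\leq s\leq m$, let \[ \Sigma_s(X,Z) = \sum_{X\subseteq Y\subseteq Z,\ |Y|=s} q^{\nu(Y)}. \] Then \[ \Sigma_s(X,Z) = q^{\nu(X) + (r+1)(s-r)+\binom{s-r}{2}} \left[\begin{matrix} m-r\\ s-r\end{matrix}\right]_q . \]
   Context: $\left[\begin{matrix} a\\ b\end{matrix}\right]_q$ denotes the Gaussian $q$-binomial coefficient. *)

theory Defs
  imports Main
begin

fun qbinom :: "'a::comm_ring_1 \<Rightarrow> nat \<Rightarrow> nat \<Rightarrow> 'a" where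
  "qbinom q n 0 = 1"
| "qbinom q 0 (Suc k) = 0"
| "qbinom q (Suc n) (Suc k) = qbinom q n k + q ^ (Suc k) * qbinom q n (Suc k)"

definition nu :: "nat set \<Rightarrow> nat set \<Rightarrow> nat \<Rightarrow> nat" where
  "nu X Z y = card {z \<in> Z. z \<ge> y} + card {x \<in> X. x \<le> y}"

definition nuSet :: "nat set \<Rightarrow> nat set \<Rightarrow> nat set \<Rightarrow> nat" where
  "nuSet X Z Y = (\<Sum>y\<in>Y. nu X Z y)"

definition Sigma_s :: "'a::comm_ring_1 \<Rightarrow> nat \<Rightarrow> nat set \<Rightarrow> nat set \<Rightarrow> 'a" where
  "Sigma_s q s X Z = (\<Sum>Y \<in> {Y. X \<subseteq> Y \<and> Y \<subseteq> Z \<and> card Y = s}. q ^ nuSet X Z Y)"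

end

theory Submission
  imports Defs
begin

text \<open>Writing \<open>W = Z - X\<close>, every \<open>w \<in> W\<close> has \<open>\<nu>(w) = r + c(w)\<close>, where \<open>c(w)\<close> counts the
  elements of \<open>W\<close> that are \<open>\<ge> w\<close>. Hence \<open>\<Sigma>\<^sub>s(X,Z) = q\<^bsup>\<nu>(X) + r(s-r)\<^esup> G\<^sub>W(s-r)\<close>, where
  \<open>G\<^sub>W(k)\<close> sums \<open>q\<^bsup>c(S)\<^esup>\<close> over the \<open>k\<close>-subsets \<open>S\<close> of \<open>W\<close>. Removing the largest element \<open>b\<close>
  of \<open>W\<close> shifts \<open>c\<close> by one on the rest, and \<open>c(b) = 1\<close>, so \<open>G\<^sub>W\<close> satisfies the q-Pascal
  recurrence up to the factor \<open>q\<^bsup>k\<^esup>\<close>, giving \<open>G\<^sub>W(k) = q\<^bsup>binom(k+1,2)\<^esup> [|W|, k]\<^sub>q\<close>.\<close>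

definition count_ge :: "nat set \<Rightarrow> nat \<Rightarrow> nat" where
  "count_ge W w = card {v \<in> W. w \<le> v}"

definition subset_weight_sum :: "'a::comm_ring_1 \<Rightarrow> nat set \<Rightarrow> nat \<Rightarrow> 'a" where
  "subset_weight_sum q W k = (\<Sum>S \<in> {S. S \<subseteq> W \<and> card S = k}. q ^ (\<Sum>w\<in>S. count_ge W w))"

lemma Suc_choose_two: "Suc k choose 2 = k + (k choose 2)"
  by (simp add: numeral_2_eq_2)

lemma subsets_card_Suc_insert:
  assumes "finite A" "b \<notin> A"
  shows "{S. S \<subseteq> insert b A \<and> card S = Suc j}
       = {S. S \<subseteq> A \<and> card S = Suc j} \<union> insert b ` {S. S \<subseteq> A \<and> card S = j}"
proof -
  have "card (insert b T) = Suc j \<longleftrightarrow> card T = j" if "T \<subseteq> A" for T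
  proof -
    have "finite T" "b \<notin> T"
      using that assms finite_subset by auto
    then show ?thesis
      by simp
  qed
  then show ?thesis
    by (auto simp: subset_insert_lemma)
qed

lemma count_ge_insert_max:
  assumes "finite A" "\<forall>a\<in>A. a < b"
  shows "count_ge (insert b A) b = 1"
    and "a \<in> A \<Longrightarrow> count_ge (insert b A) a = Suc (count_ge A a)"
proof -
  have "{v \<in> insert b A. b \<le> v} = {b}"
    using assms(2) by force
  then show "count_ge (insert b A) b = 1"
    by (simp add: count_ge_def)
next
  assume "a \<in> A"
  then have "{v \<in> insert b A. a \<le> v} = insert b {v \<in> A. a \<le> v}"
    using assms(2) by force
  moreover have "b \<notin> A"
    using assms(2) by blast
  ultimately show "count_ge (insert b A) a = Suc (count_ge A a)"
    using assms(1) by (simp add: count_ge_def)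
qed

lemma subset_weight_sum_insert_max:
  fixes q :: "'a::comm_ring_1"
  assumes A: "finite A" and b: "\<forall>a\<in>A. a < b"
  shows "subset_weight_sum q (insert b A) (Suc j)
       = q ^ Suc j * (subset_weight_sum q A (Suc j) + subset_weight_sum q A j)"
proof -
  let ?c = "count_ge (insert b A)"
  let ?P = "{S. S \<subseteq> A \<and> card S = Suc j}"
  let ?Q = "{S. S \<subseteq> A \<and> card S = j}"
  have bA: "b \<notin> A"
    using b by blast
  have shift: "(\<Sum>w\<in>S. ?c w) = card S + (\<Sum>w\<in>S. count_ge A w)" if "S \<subseteq> A" for S
  proof -
    have "(\<Sum>w\<in>S. ?c w) = (\<Sum>w\<in>S. 1 + count_ge A w)"
      using that count_ge_insert_max(2)[OF A b] by (intro sum.cong) auto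
    then show ?thesis
      by (simp only: sum.distrib card_eq_sum)
  qed
  have old: "(\<Sum>S\<in>?P. q ^ (\<Sum>w\<in>S. ?c w)) = q ^ Suc j * subset_weight_sum q A (Suc j)"
    unfolding subset_weight_sum_def sum_distrib_left
    by (intro sum.cong refl) (simp add: shift power_add)
  have new: "(\<Sum>S\<in>insert b ` ?Q. q ^ (\<Sum>w\<in>S. ?c w)) = q ^ Suc j * subset_weight_sum q A j"
  proof -
    have "inj_on (insert b) ?Q"
      using bA by (intro inj_onI) (metis Diff_insert_absorb mem_Collect_eq subsetD)
    moreover have "(\<Sum>w\<in>insert b S. ?c w) = Suc j + (\<Sum>w\<in>S. count_ge A w)" if "S \<in> ?Q" for S
    proof -
      have "finite S" "b \<notin> S"
        using that A bA finite_subset by auto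
      then show ?thesis
        using that shift count_ge_insert_max(1)[OF A b] by simp
    qed
    ultimately show ?thesis
      by (simp add: sum.reindex subset_weight_sum_def sum_distrib_left power_add mult.assoc)
  qed
  have "?P \<inter> insert b ` ?Q = {}"
    using bA by auto
  then have "subset_weight_sum q (insert b A) (Suc j)
           = (\<Sum>S\<in>?P. q ^ (\<Sum>w\<in>S. ?c w)) + (\<Sum>S\<in>insert b ` ?Q. q ^ (\<Sum>w\<in>S. ?c w))"
    unfolding subset_weight_sum_def subsets_card_Suc_insert[OF A bA]
    using A by (intro sum.union_disjoint) auto
  then show ?thesis
    by (simp add: old new distrib_left)
qed

lemma subset_weight_sum_0:
  assumes "finite W"
  shows "subset_weight_sum q W 0 = 1"
proof -
  have "{S. S \<subseteq> W \<and> card S = 0} = {{}}"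
    using assms finite_subset by fastforce
  then show ?thesis
    by (simp add: subset_weight_sum_def)
qed

lemma subset_weight_sum_eq_qbinom:
  fixes q :: "'a::comm_ring_1"
  assumes "finite W"
  shows "subset_weight_sum q W k = q ^ (Suc k choose 2) * qbinom q (card W) k"
  using assms
proof (induction W arbitrary: k rule: finite_linorder_max_induct)
  case empty
  show ?case
  proof (cases k)
    case 0
    then show ?thesis
      by (simp add: subset_weight_sum_0 numeral_2_eq_2)
  next
    case (Suc j)
    have "{S. S = {} \<and> card S = Suc j} = ({}::nat set set)"
      by auto
    then show ?thesis
      using Suc by (simp add: subset_weight_sum_def del: Collect_empty_eq)
  qed
next
  case (insert b A)
  have card_insert: "card (insert b A) = Suc (card A)"
    using insert.hyps by (auto simp: card_insert_if)
  show ?case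
  proof (cases k)
    case 0
    then show ?thesis
      using insert.hyps by (simp add: subset_weight_sum_0 numeral_2_eq_2)
  next
    case (Suc j)
    have "subset_weight_sum q (insert b A) k
        = q ^ Suc j * (q ^ (Suc (Suc j) choose 2) * qbinom q (card A) (Suc j)
                       + q ^ (Suc j choose 2) * qbinom q (card A) j)"
      using Suc insert by (simp add: subset_weight_sum_insert_max)
    also have "\<dots> = q ^ (Suc k choose 2) * qbinom q (card (insert b A)) k"
      unfolding Suc card_insert Suc_choose_two[of "Suc j"] power_add
      by (simp add: algebra_simps)
    finally show ?thesis .
  qed
qed

lemma nu_notin:
  assumes "finite Z" "X \<subseteq> Z" "w \<notin> X"
  shows "nu X Z w = card X + count_ge (Z - X) w"
proof -
  have fX: "finite X"
    using assms finite_subset by blast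
  have "{z \<in> Z. w \<le> z} = {v \<in> Z - X. w \<le> v} \<union> {x \<in> X. w \<le> x}"
    using assms(2) by auto
  then have "card {z \<in> Z. w \<le> z} = count_ge (Z - X) w + card {x \<in> X. w \<le> x}"
    unfolding count_ge_def using assms(1) fX by (simp add: card_Un_disjoint disjoint_iff)
  moreover have "card X = card {x \<in> X. w \<le> x} + card {x \<in> X. x \<le> w}"
  proof -
    have "X = {x \<in> X. w \<le> x} \<union> {x \<in> X. x \<le> w}"
      by auto
    moreover have "{x \<in> X. w \<le> x} \<inter> {x \<in> X. x \<le> w} = {}"
      using assms(3) by (auto dest: antisym)
    ultimately show ?thesis
      using fX by (metis (no_types, lifting) card_Un_disjoint finite_Un)
  qed
  ultimately show ?thesis
    unfolding nu_def by simp
qed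

lemma Sigma_s_eq_subset_weight_sum:
  fixes q :: "'a::comm_ring_1"
  assumes Z: "finite Z" and XZ: "X \<subseteq> Z" and s: "card X \<le> s"
  shows "Sigma_s q s X Z
       = q ^ (nuSet X Z X + card X * (s - card X)) * subset_weight_sum q (Z - X) (s - card X)"
proof -
  define W where "W = Z - X"
  define k where "k = s - card X"
  have fX: "finite X"
    using Z XZ finite_subset by blast
  have nuSet_Un: "nuSet X Z (X \<union> S) = nuSet X Z X + card X * k + (\<Sum>w\<in>S. count_ge W w)"
    if "S \<subseteq> W" "card S = k" for S
  proof -
    have "finite S" "X \<inter> S = {}"
      using that Z finite_subset unfolding W_def by auto
    then have "nuSet X Z (X \<union> S) = nuSet X Z X + (\<Sum>w\<in>S. nu X Z w)"
      unfolding nuSet_def using fX by (simp add: sum.union_disjoint)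
    also have "(\<Sum>w\<in>S. nu X Z w) = (\<Sum>w\<in>S. card X + count_ge W w)"
      using that Z XZ nu_notin unfolding W_def by (intro sum.cong) auto
    finally show ?thesis
      using that by (simp add: sum.distrib mult.commute)
  qed
  have "Sigma_s q s X Z = (\<Sum>S\<in>{S. S \<subseteq> W \<and> card S = k}. q ^ nuSet X Z (X \<union> S))"
    unfolding Sigma_s_def
  proof (rule sum.reindex_bij_witness[of _ "\<lambda>S. X \<union> S" "\<lambda>Y. Y - X"])
    fix Y assume "Y \<in> {Y. X \<subseteq> Y \<and> Y \<subseteq> Z \<and> card Y = s}"
    moreover from this have "finite Y"
      using Z finite_subset by blast
    ultimately show "X \<union> (Y - X) = Y" "Y - X \<in> {S. S \<subseteq> W \<and> card S = k}"
      "q ^ nuSet X Z (X \<union> (Y - X)) = q ^ nuSet X Z Y"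
      by (auto simp: W_def k_def card_Diff_subset fX Un_absorb1)
  next
    fix S assume S: "S \<in> {S. S \<subseteq> W \<and> card S = k}"
    moreover from this have "finite S" "X \<inter> S = {}"
      using Z finite_subset unfolding W_def by auto
    ultimately show "X \<union> S - X = S" "X \<union> S \<in> {Y. X \<subseteq> Y \<and> Y \<subseteq> Z \<and> card Y = s}"
      using XZ s fX by (auto simp: W_def k_def card_Un_disjoint Int_commute)
  qed
  also have "\<dots> = q ^ (nuSet X Z X + card X * k) * subset_weight_sum q W k"
    unfolding subset_weight_sum_def sum_distrib_left
    by (intro sum.cong refl) (simp add: nuSet_Un power_add)
  finally show ?thesis
    unfolding W_def k_def .
qed

theorem mainTheorem15:
  fixes q :: "'a::comm_ring_1" and X Z :: "nat set" and r m s :: nat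
  assumes "finite Z" and "0 \<notin> Z" and "X \<subseteq> Z"
    and "r = card X" and "m = card Z"
    and "r \<le> s" and "s \<le> m"
  shows "Sigma_s q s X Z
         = q ^ (nuSet X Z X + (r + 1) * (s - r) + ((s - r) choose 2)) * qbinom q (m - r) (s - r)"
proof -
  obtain k where k: "s = r + k"
    using \<open>r \<le> s\<close> le_iff_add by blast
  have "card (Z - X) = m - r"
    using assms finite_subset[OF assms(3,1)] by (simp add: card_Diff_subset)
  then have "Sigma_s q s X Z
           = q ^ (nuSet X Z X + r * (s - r)) * (q ^ (Suc (s - r) choose 2) * qbinom q (m - r) (s - r))"
    using assms by (simp add: Sigma_s_eq_subset_weight_sum subset_weight_sum_eq_qbinom)
  then show ?thesis
    unfolding k by (simp add: Suc_choose_two power_add algebra_simps)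
qed

end
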